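(* Let $K$ be a field, $\nu$ a valuation on $K[x]$, and $Q,Q'$ key polynomials for $\nu$ with $\epsilon(Q)\le\epsilon(Q')$. Then for every $f\in K[x]$, if $\nu_Q(f)=\nu(f)$ then $\nu_{Q'}(f)=\nu(f)$.
   Context: $\nu:K[x]\to\Gamma\cup\{\infty\}$ is a valuation ($\Gamma$ an ordered abelian group) with $\nu(f)=\infty$ only for $f=0$; $\Gamma'=\Gamma\otimes\mathbb{Q}$. For $k\in\mathbb{N}$, $\partial_kf=\frac{1}{k!}\frac{d^kf}{dx^k}$. For nonconstant $f$, $\epsilon(f)=\max\{(\nu(f)-\nu(\partial_kf))/k\mid 1\le k\le\deg f,\ \partial_kf\ne0\}\in\Gamma'$. A key polynomial is a monic nonconstant $Q\in K[x]$ such that every nonconstant $f\in K[x]$ with $\epsilon(f)\ge\epsilon(Q)$ satisfies $\deg f\ge\deg Q$. For monic nonconstant $Q$, the $Q$-expansion of $f$ is the unique expression $f=f_0+f_1Q+\dots+f_nQ^n$ with each $f_i=0$ or $\deg f_i<\deg Q$, and $\nu_Q(f)=\min_i\nu(f_iQ^i)$ (the $Q$-truncation of $\nu$). *)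

theory Defs
  imports "HOL-Computational_Algebra.Polynomial"
begin

text \<open>Valuation on K[x] with values in Gamma \<union> {\<infinity>}: we represent nu as a total
 function into Gamma whose value at 0 is irrelevant (nu 0 = \<infinity> by convention);
 all axioms and uses only concern nonzero polynomials.\<close>
definition is_valuation :: "('a::field poly \<Rightarrow> 'g::linordered_ab_group_add) \<Rightarrow> bool" where
  "is_valuation \<nu> \<longleftrightarrow>
     (\<forall>f g. f \<noteq> 0 \<longrightarrow> g \<noteq> 0 \<longrightarrow> \<nu> (f * g) = \<nu> f + \<nu> g) \<and>
     (\<forall>f g. f \<noteq> 0 \<longrightarrow> g \<noteq> 0 \<longrightarrow> f + g \<noteq> 0 \<longrightarrow> min (\<nu> f) (\<nu> g) \<le> \<nu> (f + g))"

text \<open>Hasse derivative: partial_k f = (1/k!) d^k f / dx^k, i.e. coefficientwise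
 x^i \<mapsto> (i choose k) x^(i-k).\<close>
definition hasse_deriv :: "nat \<Rightarrow> 'a::comm_ring_1 poly \<Rightarrow> 'a poly" where
  "hasse_deriv k f = Abs_poly (\<lambda>i. of_nat ((i + k) choose k) * coeff f (i + k))"

definition nsmul :: "nat \<Rightarrow> 'g::ab_group_add \<Rightarrow> 'g" where
  "nsmul n a = ((+) a ^^ n) 0"

text \<open>Elements of Gamma' = Gamma \<otimes> Q represented as a/m (a in Gamma, m > 0);
 a/m \<le> b/n iff n a \<le> m b.\<close>
definition frac_le :: "'g::linordered_ab_group_add \<times> nat \<Rightarrow> 'g \<times> nat \<Rightarrow> bool" where
  "frac_le p q \<longleftrightarrow> nsmul (snd q) (fst p) \<le> nsmul (snd p) (fst q)"

definition eps_idx :: "'a::field poly \<Rightarrow> nat set" where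
  "eps_idx f = {k. 1 \<le> k \<and> k \<le> degree f \<and> hasse_deriv k f \<noteq> 0}"

definition eps_term :: "('a::field poly \<Rightarrow> 'g::linordered_ab_group_add) \<Rightarrow> 'a poly \<Rightarrow> nat \<Rightarrow> 'g \<times> nat" where
  "eps_term \<nu> f k = (\<nu> f - \<nu> (hasse_deriv k f), k)"

text \<open>eps_le nu f g means epsilon(f) \<le> epsilon(g), where epsilon is the maximum of the
 candidates; i.e. some candidate of g dominates all candidates of f.\<close>
definition eps_le :: "('a::field poly \<Rightarrow> 'g::linordered_ab_group_add) \<Rightarrow> 'a poly \<Rightarrow> 'a poly \<Rightarrow> bool" where
  "eps_le \<nu> f g \<longleftrightarrow>
     (\<exists>k\<in>eps_idx g. \<forall>j\<in>eps_idx f. frac_le (eps_term \<nu> f j) (eps_term \<nu> g k))"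

definition key_poly :: "('a::field poly \<Rightarrow> 'g::linordered_ab_group_add) \<Rightarrow> 'a poly \<Rightarrow> bool" where
  "key_poly \<nu> Q \<longleftrightarrow> lead_coeff Q = 1 \<and> degree Q > 0 \<and>
     (\<forall>f. degree f > 0 \<longrightarrow> eps_le \<nu> Q f \<longrightarrow> degree Q \<le> degree f)"

text \<open>i-th coefficient of the Q-expansion f = sum f_i Q^i (deg f_i < deg Q or f_i = 0).\<close>
definition expcoeff :: "'a::field poly \<Rightarrow> 'a poly \<Rightarrow> nat \<Rightarrow> 'a poly" where
  "expcoeff Q f i = (f div Q ^ i) mod Q"

definition trunc_val :: "('a::field poly \<Rightarrow> 'g::linordered_ab_group_add) \<Rightarrow> 'a poly \<Rightarrow> 'a poly \<Rightarrow> 'g" where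
  "trunc_val \<nu> Q f = Min {\<nu> (expcoeff Q f i * Q ^ i) | i. i \<le> degree f \<and> expcoeff Q f i \<noteq> 0}"

end

theory Submission
  imports Defs
begin

text \<open>
  Write \<open>\<epsilon>(Q) = A/b\<close> with \<open>b\<close> the largest index at which the maximum is attained, and say
  that \<open>h\<close> peaks at \<open>a\<close> if \<open>(\<nu> h - \<nu> (\<partial>\<^sub>k h))/k \<le> A/b\<close> for all \<open>k\<close>, with equality at \<open>k = a\<close>
  and strict inequality for \<open>k > a\<close>. By the Leibniz rule for Hasse derivatives peaks add up
  under multiplication. \<open>Q\<close> peaks at \<open>b\<close>, and, \<open>Q\<close> being a key polynomial, every nonzero
  polynomial of smaller degree peaks at \<open>0\<close>; so the \<open>i\<close>-th term of the \<open>Q\<close>-expansion of \<open>f\<close>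
  peaks at \<open>i b\<close>. If \<open>\<nu>\<^sub>Q(f) = \<nu>(f)\<close>, the ultrametric inequality then bounds every slope of \<open>f\<close>
  by \<open>A/b\<close>, i.e. \<open>\<epsilon>(f) \<le> \<epsilon>(Q)\<close>. If \<open>\<nu>\<^sub>Q(f) < \<nu>(f)\<close>, one term's derivative dominates some
  \<open>\<partial>\<^sub>K f\<close> and forces \<open>\<epsilon>(f) > \<epsilon>(Q)\<close>. Hence \<open>\<nu>\<^sub>Q(f) = \<nu>(f)\<close> exactly when \<open>\<epsilon>(f) \<le> \<epsilon>(Q)\<close>, and
  the corollary is transitivity of \<open>\<le>\<close> on \<open>\<epsilon>\<close>.
\<close>

lemma nsmul_0 [simp]: "nsmul 0 a = 0"
  by (simp add: nsmul_def)

lemma nsmul_Suc: "nsmul (Suc n) a = a + nsmul n a"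
  by (simp add: nsmul_def)

lemma nsmul_add_left: "nsmul (m + n) a = nsmul m a + nsmul n a"
  by (induction m) (simp_all add: nsmul_Suc ac_simps)

lemma nsmul_add_right: "nsmul n (a + c) = nsmul n a + nsmul n c"
  by (induction n) (simp_all add: nsmul_Suc ac_simps)

lemma nsmul_zero_right [simp]: "nsmul n 0 = 0"
  by (induction n) (simp_all add: nsmul_Suc)

lemma nsmul_diff: "nsmul n (a - c) = nsmul n a - nsmul n c"
  using nsmul_add_right[of n "a - c" c] by (simp add: eq_diff_eq)

lemma nsmul_mult: "nsmul (m * n) a = nsmul m (nsmul n a)"
  by (induction m) (simp_all add: nsmul_Suc nsmul_add_left)

lemma nsmul_commute: "nsmul m (nsmul n a) = nsmul n (nsmul m a)"
  by (metis nsmul_mult mult.commute)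

lemma nsmul_mono: "(a::'g::linordered_ab_group_add) \<le> c \<Longrightarrow> nsmul n a \<le> nsmul n c"
  by (induction n) (simp_all add: nsmul_Suc add_mono)

lemma nsmul_strict_mono:
  "n > 0 \<Longrightarrow> (a::'g::linordered_ab_group_add) < c \<Longrightarrow> nsmul n a < nsmul n c"
proof (induction n)
  case (Suc n)
  then show ?case
    by (cases n) (simp_all add: nsmul_Suc add_strict_mono)
qed simp

lemma nsmul_less_imp_less: "nsmul n (a::'g::linordered_ab_group_add) < nsmul n c \<Longrightarrow> a < c"
  using nsmul_mono[of c a n] by (meson not_le)

lemma nsmul_le_imp_le:
  "n > 0 \<Longrightarrow> nsmul n (a::'g::linordered_ab_group_add) \<le> nsmul n c \<Longrightarrow> a \<le> c"
  using nsmul_strict_mono[of n c a] by (meson not_le)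


lemma frac_le_refl: "frac_le p p"
  by (simp add: frac_le_def)

lemma frac_le_total: "frac_le p q \<or> frac_le q p"
  by (auto simp: frac_le_def)

lemma frac_le_trans:
  assumes "snd q > 0" "frac_le p q" "frac_le q r"
  shows "frac_le p r"
proof -
  obtain x m y n z l where pqr: "p = (x, m)" "q = (y, n)" "r = (z, l)"
    by (metis prod.exhaust)
  have le: "nsmul n x \<le> nsmul m y" "nsmul l y \<le> nsmul n z"
    using assms pqr by (auto simp: frac_le_def)
  have "nsmul n (nsmul l x) = nsmul l (nsmul n x)" by (rule nsmul_commute)
  also have "\<dots> \<le> nsmul l (nsmul m y)" using le by (simp add: nsmul_mono)
  also have "\<dots> = nsmul m (nsmul l y)" by (rule nsmul_commute)
  also have "\<dots> \<le> nsmul m (nsmul n z)" using le by (simp add: nsmul_mono)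
  also have "\<dots> = nsmul n (nsmul m z)" by (rule nsmul_commute)
  finally have "nsmul l x \<le> nsmul m z"
    using assms(1) pqr by (auto intro: nsmul_le_imp_le)
  then show ?thesis using pqr by (simp add: frac_le_def)
qed

lemma frac_le_not_le_trans:
  assumes "\<not> frac_le q p" "frac_le q r" "snd r > 0"
  shows "\<not> frac_le r p"
proof -
  obtain x m y n z l where pqr: "p = (x, m)" "q = (y, n)" "r = (z, l)"
    by (metis prod.exhaust)
  have le: "nsmul n x < nsmul m y" "nsmul l y \<le> nsmul n z"
    using assms pqr by (auto simp: frac_le_def)
  have "nsmul n (nsmul l x) = nsmul l (nsmul n x)" by (rule nsmul_commute)
  also have "\<dots> < nsmul l (nsmul m y)" using le assms(3) pqr by (simp add: nsmul_strict_mono)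
  also have "\<dots> = nsmul m (nsmul l y)" by (rule nsmul_commute)
  also have "\<dots> \<le> nsmul m (nsmul n z)" using le by (simp add: nsmul_mono)
  also have "\<dots> = nsmul n (nsmul m z)" by (rule nsmul_commute)
  finally have "nsmul l x < nsmul m z" by (rule nsmul_less_imp_less)
  then show ?thesis using pqr by (simp add: frac_le_def)
qed

lemma frac_le_greatest_exists:
  assumes "finite S" "S \<noteq> {}" "\<forall>j\<in>S. snd (p j) > 0"
  shows "\<exists>b\<in>S. \<forall>j\<in>S. frac_le (p j) (p b)"
  using assms
proof (induction S rule: finite_ne_induct)
  case (singleton x)
  then show ?case by (simp add: frac_le_refl)
next
  case (insert x F)
  then obtain b where b: "b \<in> F" "\<forall>j\<in>F. frac_le (p j) (p b)" by auto
  show ?case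
  proof (cases "frac_le (p x) (p b)")
    case True
    then show ?thesis using b by auto
  next
    case False
    then have "frac_le (p b) (p x)" using frac_le_total by blast
    then have "\<forall>j\<in>F. frac_le (p j) (p x)" using b insert.prems frac_le_trans by blast
    then show ?thesis by (auto simp: frac_le_refl)
  qed
qed

lemma finite_eps_idx: "finite (eps_idx f)"
  by (rule finite_subset[of _ "{..degree f}"]) (auto simp: eps_idx_def)

lemma snd_eps_term_pos: "k \<in> eps_idx f \<Longrightarrow> snd (eps_term \<nu> f k) > 0"
  by (simp add: eps_idx_def eps_term_def)

lemma eps_le_trans:
  assumes "eps_le \<nu> f g" "eps_le \<nu> g h"
  shows "eps_le \<nu> f h"
proof -
  obtain k where k: "k \<in> eps_idx g" "\<forall>j\<in>eps_idx f. frac_le (eps_term \<nu> f j) (eps_term \<nu> g k)"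
    using assms(1) by (auto simp: eps_le_def)
  obtain l where l: "l \<in> eps_idx h" "\<forall>j\<in>eps_idx g. frac_le (eps_term \<nu> g j) (eps_term \<nu> h l)"
    using assms(2) by (auto simp: eps_le_def)
  have "frac_le (eps_term \<nu> f j) (eps_term \<nu> h l)" if "j \<in> eps_idx f" for j
    using frac_le_trans[OF snd_eps_term_pos[OF k(1)]] k l that by blast
  then show ?thesis using l(1) by (auto simp: eps_le_def)
qed


lemma coeff_hasse_deriv:
  "coeff (hasse_deriv k f) i = of_nat ((i + k) choose k) * coeff f (i + k)"
proof -
  have "coeff (Abs_poly (\<lambda>i. of_nat ((i + k) choose k) * coeff f (i + k)))
      = (\<lambda>i. of_nat ((i + k) choose k) * coeff f (i + k))"
    by (rule coeff_Abs_poly[where n = "degree f"]) (simp add: coeff_eq_0)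
  then show ?thesis by (simp add: hasse_deriv_def)
qed

lemma hasse_deriv_0 [simp]: "hasse_deriv 0 f = f"
  by (rule poly_eqI) (simp add: coeff_hasse_deriv)

lemma hasse_deriv_zero [simp]: "hasse_deriv k 0 = 0"
  by (rule poly_eqI) (simp add: coeff_hasse_deriv)

lemma hasse_deriv_add: "hasse_deriv k (f + g) = hasse_deriv k f + hasse_deriv k g"
  by (rule poly_eqI) (simp add: coeff_hasse_deriv algebra_simps)

lemma hasse_deriv_sum: "hasse_deriv k (sum f I) = (\<Sum>i\<in>I. hasse_deriv k (f i))"
  by (induction I rule: infinite_finite_induct) (simp_all add: hasse_deriv_add)

lemma hasse_deriv_smult: "hasse_deriv k (smult a f) = smult a (hasse_deriv k f)"
  by (rule poly_eqI) (simp add: coeff_hasse_deriv algebra_simps)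

lemma hasse_deriv_eq_0_if_degree_less: "degree f < k \<Longrightarrow> hasse_deriv k f = 0"
  by (rule poly_eqI) (simp add: coeff_hasse_deriv coeff_eq_0)

lemma hasse_deriv_neq_0_imp_le_degree: "hasse_deriv k f \<noteq> 0 \<Longrightarrow> k \<le> degree f"
  using hasse_deriv_eq_0_if_degree_less by (meson not_le)

lemma hasse_deriv_degree_neq_0: "f \<noteq> 0 \<Longrightarrow> hasse_deriv (degree f) f \<noteq> 0"
  using coeff_hasse_deriv[of "degree f" f 0] by auto

lemma hasse_deriv_Suc_pCons_0:
  "hasse_deriv (Suc k) (pCons 0 h) = pCons 0 (hasse_deriv (Suc k) h) + hasse_deriv k h"
proof (rule poly_eqI)
  fix i
  show "coeff (hasse_deriv (Suc k) (pCons 0 h)) i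
      = coeff (pCons 0 (hasse_deriv (Suc k) h) + hasse_deriv k h) i"
  proof (cases i)
    case 0
    then show ?thesis by (simp add: coeff_hasse_deriv)
  next
    case (Suc j)
    have "(Suc j + Suc k) choose Suc k = ((j + Suc k) choose Suc k) + ((Suc j + k) choose k)"
      by simp
    then show ?thesis
      using Suc by (simp add: coeff_hasse_deriv algebra_simps coeff_pCons split: nat.splits)
  qed
qed

lemma sum_pCons_0: "(\<Sum>i\<in>I. pCons 0 (f i)) = pCons 0 (sum f I)"
  by (induction I rule: infinite_finite_induct) (simp_all add: add_pCons[symmetric])

lemma hasse_deriv_mult:
  "hasse_deriv k (f * g) = (\<Sum>i\<le>k. hasse_deriv i f * hasse_deriv (k - i) g)"
proof (induction f arbitrary: k rule: pCons_induct)
  case 0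
  then show ?case by simp
next
  case (pCons a p)
  show ?case
  proof (cases k)
    case 0
    then show ?thesis by simp
  next
    case (Suc k')
    have pCons_eq: "hasse_deriv (Suc i) (pCons a p)
        = pCons 0 (hasse_deriv (Suc i) p) + hasse_deriv i p" for i
    proof -
      have "hasse_deriv (Suc i) [:a:] = 0"
        by (rule hasse_deriv_eq_0_if_degree_less) simp
      then show ?thesis
        using hasse_deriv_add[of "Suc i" "[:a:]" "pCons 0 p"] hasse_deriv_Suc_pCons_0[of i p]
        by simp
    qed
    have "hasse_deriv k (pCons a p * g) = smult a (hasse_deriv (Suc k') g)
        + pCons 0 (hasse_deriv (Suc k') (p * g)) + hasse_deriv k' (p * g)"
      using Suc by (simp add: hasse_deriv_add hasse_deriv_smult hasse_deriv_Suc_pCons_0)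
    also have "\<dots> = smult a (hasse_deriv (Suc k') g)
        + pCons 0 (p * hasse_deriv (Suc k') g
                   + (\<Sum>i\<le>k'. hasse_deriv (Suc i) p * hasse_deriv (k' - i) g))
        + (\<Sum>i\<le>k'. hasse_deriv i p * hasse_deriv (k' - i) g)"
      using pCons.IH[of "Suc k'"] pCons.IH[of k']
      by (simp del: sum.atMost_Suc add: sum.atMost_Suc_shift)
    also have "\<dots> = (\<Sum>i\<le>k. hasse_deriv i (pCons a p) * hasse_deriv (k - i) g)"
      using Suc
      by (simp del: sum.atMost_Suc add: sum.atMost_Suc_shift pCons_eq distrib_right
          sum.distrib sum_pCons_0 add_pCons)
    finally show ?thesis .
  qed
qed


lemma expansion_with_remainder:
  "f = (\<Sum>i<n. expcoeff Q f i * Q ^ i) + (f div Q ^ n) * Q ^ n"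
proof (induction n)
  case 0
  then show ?case by simp
next
  case (Suc n)
  have "f div Q ^ n = expcoeff Q f n + (f div Q ^ Suc n) * Q"
    by (metis expcoeff_def div_mult_mod_eq add.commute poly_div_mult_right power_Suc2)
  then have "(f div Q ^ n) * Q ^ n = expcoeff Q f n * Q ^ n + (f div Q ^ Suc n) * Q ^ Suc n"
    by (simp add: distrib_right mult.assoc power_Suc2 mult.commute[of Q])
  then show ?case using Suc by (simp add: ac_simps)
qed

lemma expansion:
  assumes "degree Q > 0"
  shows "(\<Sum>i\<le>degree f. expcoeff Q f i * Q ^ i) = f"
proof -
  let ?n = "Suc (degree f)"
  have "degree (Q ^ ?n) = ?n * degree Q"
    by (rule degree_power_eq) (use assms in auto)
  also have "\<dots> \<ge> ?n * 1" using assms by (intro mult_le_mono2) simp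
  finally have "f div Q ^ ?n = 0" by (intro div_poly_less) simp
  then show ?thesis
    using expansion_with_remainder[where f = f and n = "?n" and Q = Q] by (simp add: lessThan_Suc_atMost)
qed

lemma degree_expcoeff_less:
  "Q \<noteq> 0 \<Longrightarrow> expcoeff Q f i \<noteq> 0 \<Longrightarrow> degree (expcoeff Q f i) < degree Q"
  unfolding expcoeff_def by (rule degree_mod_less')


locale poly_valuation =
  fixes \<nu> :: "'a::field poly \<Rightarrow> 'g::linordered_ab_group_add"
  assumes valuation: "is_valuation \<nu>"
begin

lemma val_mult: "f \<noteq> 0 \<Longrightarrow> g \<noteq> 0 \<Longrightarrow> \<nu> (f * g) = \<nu> f + \<nu> g"
  using valuation by (simp add: is_valuation_def)

lemma val_add_ge_min: "f \<noteq> 0 \<Longrightarrow> g \<noteq> 0 \<Longrightarrow> f + g \<noteq> 0 \<Longrightarrow> min (\<nu> f) (\<nu> g) \<le> \<nu> (f + g)"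
  using valuation by (simp add: is_valuation_def)

lemma val_minus: "\<nu> (- f) = \<nu> f"
proof -
  have "\<nu> 1 = 0" using val_mult[of 1 1] by simp
  then have "\<nu> (-1) + \<nu> (-1) = 0" using val_mult[of "-1" "-1"] by simp
  then have "\<nu> (-1) = 0" by (simp add: double_zero)
  then show ?thesis using val_mult[of "-1" f] by (cases "f = 0") simp_all
qed

lemma val_add_eq_left:
  assumes "f \<noteq> 0" "g \<noteq> 0" "\<nu> f < \<nu> g"
  shows "f + g \<noteq> 0 \<and> \<nu> (f + g) = \<nu> f"
proof -
  have fg: "f + g \<noteq> 0"
  proof
    assume "f + g = 0"
    then have "g = - f" by (simp add: eq_neg_iff_add_eq_0 add.commute)
    then show False using assms(3) val_minus[of f] by simp
  qed
  have "\<nu> f \<le> \<nu> (f + g)" using val_add_ge_min[OF assms(1,2) fg] assms(3) by simp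
  moreover have "min (\<nu> (f + g)) (\<nu> (- g)) \<le> \<nu> f"
    using val_add_ge_min[OF fg, of "- g"] assms by simp
  then have "\<nu> (f + g) \<le> \<nu> f" using assms(3) val_minus[of g] by (simp add: min_def split: if_splits)
  ultimately show ?thesis using fg by simp
qed

lemma val_sum_ge_term:
  assumes "finite I" "sum t I \<noteq> 0"
  shows "\<exists>i\<in>I. t i \<noteq> 0 \<and> \<nu> (t i) \<le> \<nu> (sum t I)"
  using assms
proof (induction I rule: finite_induct)
  case empty
  then show ?case by simp
next
  case (insert x F)
  then have sum_insert: "sum t (insert x F) = t x + sum t F" by simp
  show ?case
  proof (cases "t x = 0 \<or> sum t F = 0")
    case True
    then show ?thesis using insert sum_insert by auto
  next
    case False
    then have "min (\<nu> (t x)) (\<nu> (sum t F)) \<le> \<nu> (sum t (insert x F))"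
      using val_add_ge_min sum_insert insert.prems by simp
    moreover obtain i where "i \<in> F" "t i \<noteq> 0" "\<nu> (t i) \<le> \<nu> (sum t F)"
      using insert.IH False by auto
    ultimately show ?thesis using False by (force simp: min_def split: if_splits)
  qed
qed

lemma val_sum_eq_dominant_term:
  assumes "finite I" "i\<^sub>0 \<in> I" "t i\<^sub>0 \<noteq> 0"
    and "\<And>i. i \<in> I \<Longrightarrow> i \<noteq> i\<^sub>0 \<Longrightarrow> t i \<noteq> 0 \<Longrightarrow> \<nu> (t i\<^sub>0) < \<nu> (t i)"
  shows "sum t I \<noteq> 0 \<and> \<nu> (sum t I) = \<nu> (t i\<^sub>0)"
proof -
  have sum_split: "sum t I = t i\<^sub>0 + sum t (I - {i\<^sub>0})"
    using assms by (simp add: sum.remove)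
  show ?thesis
  proof (cases "sum t (I - {i\<^sub>0}) = 0")
    case True
    then show ?thesis using sum_split assms by simp
  next
    case False
    then obtain i where "i \<in> I - {i\<^sub>0}" "t i \<noteq> 0" "\<nu> (t i) \<le> \<nu> (sum t (I - {i\<^sub>0}))"
      using val_sum_ge_term[of "I - {i\<^sub>0}" t] assms by auto
    then have "\<nu> (t i\<^sub>0) < \<nu> (sum t (I - {i\<^sub>0}))" using assms(4)[of i] by auto
    then show ?thesis using val_add_eq_left[OF assms(3) False] sum_split by simp
  qed
qed

text \<open>
  With \<open>A/b\<close> standing for an element of \<open>\<Gamma>'\<close>, \<open>slope_le A b h k\<close> says
  \<open>(\<nu> h - \<nu> (\<partial>\<^sub>k h))/k \<le> A/b\<close>, multiplied out to avoid division; it is vacuous where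
  \<open>\<partial>\<^sub>k h = 0\<close>, since \<open>\<nu> 0\<close> is a junk value.
\<close>

definition slope_le :: "'g \<Rightarrow> nat \<Rightarrow> 'a poly \<Rightarrow> nat \<Rightarrow> bool" where
  "slope_le A b h k \<longleftrightarrow>
     (hasse_deriv k h \<noteq> 0 \<longrightarrow> nsmul b (\<nu> h) \<le> nsmul b (\<nu> (hasse_deriv k h)) + nsmul k A)"

definition slope_less :: "'g \<Rightarrow> nat \<Rightarrow> 'a poly \<Rightarrow> nat \<Rightarrow> bool" where
  "slope_less A b h k \<longleftrightarrow>
     (hasse_deriv k h \<noteq> 0 \<longrightarrow> nsmul b (\<nu> h) < nsmul b (\<nu> (hasse_deriv k h)) + nsmul k A)"

definition slope_peak :: "'g \<Rightarrow> nat \<Rightarrow> 'a poly \<Rightarrow> nat \<Rightarrow> bool" where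
  "slope_peak A b h a \<longleftrightarrow>
     (\<forall>k. slope_le A b h k) \<and> (\<forall>k>a. slope_less A b h k) \<and> hasse_deriv a h \<noteq> 0 \<and>
     nsmul b (\<nu> h) = nsmul b (\<nu> (hasse_deriv a h)) + nsmul a A"

lemma slope_le_iff_frac_le:
  "hasse_deriv k h \<noteq> 0 \<Longrightarrow> slope_le A b h k \<longleftrightarrow> frac_le (eps_term \<nu> h k) (A, b)"
  by (simp add: slope_le_def frac_le_def eps_term_def nsmul_diff diff_le_eq add.commute)

lemma slope_less_iff_not_frac_le:
  "hasse_deriv k h \<noteq> 0 \<Longrightarrow> slope_less A b h k \<longleftrightarrow> \<not> frac_le (A, b) (eps_term \<nu> h k)"
  by (simp add: slope_less_def frac_le_def eps_term_def nsmul_diff diff_less_eq add.commute not_le)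

lemma slope_le_0 [simp]: "slope_le A b h 0"
  by (simp add: slope_le_def)

lemma slope_less_imp_le: "slope_less A b h k \<Longrightarrow> slope_le A b h k"
  by (auto simp: slope_le_def slope_less_def)

lemma slope_le_if_slope_less_pos: "(\<And>k. k > 0 \<Longrightarrow> slope_less A b h k) \<Longrightarrow> slope_le A b h k"
  by (cases k) (simp_all add: slope_less_imp_le)

lemma slope_peak_nonzero: "slope_peak A b h a \<Longrightarrow> h \<noteq> 0"
  by (auto simp: slope_peak_def)

lemma slope_peak_one: "slope_peak A b 1 0"
proof -
  have "slope_less A b 1 k" if "k > 0" for k
    using that by (auto simp: slope_less_def hasse_deriv_eq_0_if_degree_less)
  then show ?thesis by (simp add: slope_peak_def slope_le_if_slope_less_pos)
qed

lemma slope_peak_leibniz_term: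
  assumes g: "slope_peak A b g a" and h: "slope_peak A b h c"
    and i: "i \<le> k" "hasse_deriv i g * hasse_deriv (k - i) h \<noteq> 0"
  shows "nsmul b (\<nu> (g * h)) \<le> nsmul b (\<nu> (hasse_deriv i g * hasse_deriv (k - i) h)) + nsmul k A"
    and "a < i \<or> c < k - i \<Longrightarrow>
      nsmul b (\<nu> (g * h)) < nsmul b (\<nu> (hasse_deriv i g * hasse_deriv (k - i) h)) + nsmul k A"
proof -
  have "g \<noteq> 0" "h \<noteq> 0" using g h by (simp_all add: slope_peak_nonzero)
  then have split: "nsmul b (\<nu> (g * h)) = nsmul b (\<nu> g) + nsmul b (\<nu> h)"
    "nsmul b (\<nu> (hasse_deriv i g * hasse_deriv (k - i) h)) + nsmul k A
       = (nsmul b (\<nu> (hasse_deriv i g)) + nsmul i A)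
         + (nsmul b (\<nu> (hasse_deriv (k - i) h)) + nsmul (k - i) A)"
    using i by (simp_all add: val_mult nsmul_add_right nsmul_add_left[symmetric] ac_simps)
  have bounds:
    "nsmul b (\<nu> g) \<le> nsmul b (\<nu> (hasse_deriv i g)) + nsmul i A"
    "a < i \<Longrightarrow> nsmul b (\<nu> g) < nsmul b (\<nu> (hasse_deriv i g)) + nsmul i A"
    "nsmul b (\<nu> h) \<le> nsmul b (\<nu> (hasse_deriv (k - i) h)) + nsmul (k - i) A"
    "c < k - i \<Longrightarrow> nsmul b (\<nu> h) < nsmul b (\<nu> (hasse_deriv (k - i) h)) + nsmul (k - i) A"
    using i(2) g h by (auto simp: slope_peak_def slope_le_def slope_less_def)
  show "nsmul b (\<nu> (g * h)) \<le> nsmul b (\<nu> (hasse_deriv i g * hasse_deriv (k - i) h)) + nsmul k A"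
    using split bounds by (simp add: add_mono)
  show "nsmul b (\<nu> (g * h)) < nsmul b (\<nu> (hasse_deriv i g * hasse_deriv (k - i) h)) + nsmul k A"
    if "a < i \<or> c < k - i"
    using split bounds that by (auto intro: add_less_le_mono add_le_less_mono)
qed

lemma slope_peak_mult:
  assumes g: "slope_peak A b g a" and h: "slope_peak A b h c"
  shows "slope_peak A b (g * h) (a + c)"
proof -
  define t where "t k i = hasse_deriv i g * hasse_deriv (k - i) h" for k i
  note term_le = slope_peak_leibniz_term(1)[OF g h, folded t_def]
  note term_less = slope_peak_leibniz_term(2)[OF g h, folded t_def]
  have deriv_sum: "hasse_deriv k (g * h) = (\<Sum>i\<le>k. t k i)" for k
    by (simp add: hasse_deriv_mult t_def)
  have bound_by_term: "\<exists>i\<le>k. t k i \<noteq> 0 \<and>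
      nsmul b (\<nu> (t k i)) + nsmul k A \<le> nsmul b (\<nu> (hasse_deriv k (g * h))) + nsmul k A"
    if "hasse_deriv k (g * h) \<noteq> 0" for k
    using val_sum_ge_term[of "{..k}" "t k"] that deriv_sum by (fastforce intro: nsmul_mono)
  have "slope_le A b (g * h) k" for k
    using bound_by_term[of k] term_le unfolding slope_le_def by (meson order_trans)
  moreover have "slope_less A b (g * h) k" if "a + c < k" for k
    unfolding slope_less_def
  proof
    assume "hasse_deriv k (g * h) \<noteq> 0"
    then obtain i where i: "i \<le> k" "t k i \<noteq> 0" and
      "nsmul b (\<nu> (t k i)) + nsmul k A \<le> nsmul b (\<nu> (hasse_deriv k (g * h))) + nsmul k A"
      using bound_by_term by blast
    moreover have "a < i \<or> c < k - i" using i(1) that by linarith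
    ultimately show "nsmul b (\<nu> (g * h)) < nsmul b (\<nu> (hasse_deriv k (g * h))) + nsmul k A"
      using term_less by (meson order_less_le_trans)
  qed
  moreover
  let ?k = "a + c"
  have ta: "t ?k a \<noteq> 0" using g h by (simp add: t_def slope_peak_def)
  have eq_a: "nsmul b (\<nu> (g * h)) = nsmul b (\<nu> (t ?k a)) + nsmul ?k A"
    using g h slope_peak_nonzero[OF g] slope_peak_nonzero[OF h] ta
    by (simp add: t_def slope_peak_def val_mult nsmul_add_right nsmul_add_left ac_simps)
  have "hasse_deriv ?k (g * h) \<noteq> 0 \<and> \<nu> (hasse_deriv ?k (g * h)) = \<nu> (t ?k a)"
    unfolding deriv_sum
  proof (rule val_sum_eq_dominant_term)
    fix i
    assume "i \<in> {..?k}" "i \<noteq> a" "t ?k i \<noteq> 0"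
    then have "nsmul b (\<nu> (g * h)) < nsmul b (\<nu> (t ?k i)) + nsmul ?k A"
      by (intro term_less) auto
    then show "\<nu> (t ?k a) < \<nu> (t ?k i)"
      using eq_a by (simp add: nsmul_less_imp_less)
  qed (use ta in auto)
  ultimately show ?thesis using eq_a by (simp add: slope_peak_def)
qed

lemma slope_peak_power: "slope_peak A b Q a \<Longrightarrow> slope_peak A b (Q ^ j) (j * a)"
  by (induction j) (simp_all add: slope_peak_one slope_peak_mult)

end


locale key_polynomial = poly_valuation \<nu> for \<nu> :: "'a::field poly \<Rightarrow> 'g::linordered_ab_group_add" +
  fixes Q :: "'a poly"
  assumes key_poly: "key_poly \<nu> Q"
begin

lemma degree_pos: "degree Q > 0"
  using key_poly by (simp add: key_poly_def)

lemma nonzero: "Q \<noteq> 0"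
  using degree_pos by auto

definition eps_index :: nat where
  "eps_index = Max {b \<in> eps_idx Q. \<forall>j\<in>eps_idx Q. frac_le (eps_term \<nu> Q j) (eps_term \<nu> Q b)}"

definition eps_num :: 'g where
  "eps_num = \<nu> Q - \<nu> (hasse_deriv eps_index Q)"

lemma eps_index_maximal:
  "eps_index \<in> eps_idx Q \<and> (\<forall>j\<in>eps_idx Q. frac_le (eps_term \<nu> Q j) (eps_num, eps_index))"
proof -
  have "degree Q \<in> eps_idx Q"
    using degree_pos hasse_deriv_degree_neq_0[OF nonzero] by (simp add: eps_idx_def)
  then have "\<exists>b\<in>eps_idx Q. \<forall>j\<in>eps_idx Q. frac_le (eps_term \<nu> Q j) (eps_term \<nu> Q b)"
    using frac_le_greatest_exists[OF finite_eps_idx] snd_eps_term_pos by blast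
  then have "eps_index \<in> {b \<in> eps_idx Q. \<forall>j\<in>eps_idx Q. frac_le (eps_term \<nu> Q j) (eps_term \<nu> Q b)}"
    unfolding eps_index_def by (intro Max_in) (auto intro: finite_subset[OF _ finite_eps_idx])
  then show ?thesis by (simp add: eps_term_def eps_num_def)
qed

lemma eps_index_pos: "eps_index > 0"
  using eps_index_maximal by (simp add: eps_idx_def)

lemma eps_le_iff_frac_le: "eps_le \<nu> f Q \<longleftrightarrow> (\<forall>j\<in>eps_idx f. frac_le (eps_term \<nu> f j) (eps_num, eps_index))"
proof
  assume "eps_le \<nu> f Q"
  then show "\<forall>j\<in>eps_idx f. frac_le (eps_term \<nu> f j) (eps_num, eps_index)"
    unfolding eps_le_def by (meson eps_index_maximal frac_le_trans snd_eps_term_pos)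
next
  assume "\<forall>j\<in>eps_idx f. frac_le (eps_term \<nu> f j) (eps_num, eps_index)"
  then show "eps_le \<nu> f Q"
    using eps_index_maximal unfolding eps_le_def by (force simp: eps_term_def eps_num_def)
qed

lemma eps_index_greatest:
  assumes "k \<in> eps_idx Q" "eps_index < k"
  shows "\<not> frac_le (eps_num, eps_index) (eps_term \<nu> Q k)"
proof
  assume "frac_le (eps_num, eps_index) (eps_term \<nu> Q k)"
  then have "\<forall>j\<in>eps_idx Q. frac_le (eps_term \<nu> Q j) (eps_term \<nu> Q k)"
    using eps_index_maximal eps_index_pos frac_le_trans[of "(eps_num, eps_index)"] by auto
  then have "k \<le> eps_index"
    unfolding eps_index_def using assms(1)
    by (intro Max_ge) (auto intro: finite_subset[OF _ finite_eps_idx])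
  then show False using assms(2) by simp
qed

lemma slope_peak_self: "slope_peak eps_num eps_index Q eps_index"
proof -
  have "slope_le eps_num eps_index Q k" for k
  proof (cases "k = 0 \<or> hasse_deriv k Q = 0")
    case False
    then have "k \<in> eps_idx Q" by (auto simp: eps_idx_def hasse_deriv_neq_0_imp_le_degree)
    then show ?thesis using False eps_index_maximal by (simp add: slope_le_iff_frac_le)
  qed (auto simp: slope_le_def)
  moreover have "slope_less eps_num eps_index Q k" if "eps_index < k" for k
  proof (cases "hasse_deriv k Q = 0")
    case False
    then have "k \<in> eps_idx Q"
      using that by (auto simp: eps_idx_def hasse_deriv_neq_0_imp_le_degree)
    then have "\<not> frac_le (eps_num, eps_index) (eps_term \<nu> Q k)"
      using that by (rule eps_index_greatest)
    then show ?thesis using False by (simp add: slope_less_iff_not_frac_le)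
  qed (simp add: slope_less_def)
  moreover have "hasse_deriv eps_index Q \<noteq> 0"
    using eps_index_maximal by (simp add: eps_idx_def)
  ultimately show ?thesis by (simp add: slope_peak_def eps_num_def nsmul_diff)
qed

text \<open>This is where \<open>Q\<close> being a key polynomial enters: nonconstant \<open>h\<close> of smaller degree has \<open>\<epsilon>(h) < \<epsilon>(Q)\<close>.\<close>

lemma slope_peak_degree_less:
  assumes "h \<noteq> 0" "degree h < degree Q"
  shows "slope_peak eps_num eps_index h 0"
proof -
  have "slope_less eps_num eps_index h k" if "k > 0" for k
  proof (cases "hasse_deriv k h = 0")
    case False
    then have k: "k \<in> eps_idx h" "degree h > 0"
      using that hasse_deriv_neq_0_imp_le_degree[of k h] by (auto simp: eps_idx_def)
    then have "\<not> eps_le \<nu> Q h" using key_poly assms(2) unfolding key_poly_def by (meson leD)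
    then obtain j where "j \<in> eps_idx Q" "\<not> frac_le (eps_term \<nu> Q j) (eps_term \<nu> h k)"
      using k by (auto simp: eps_le_def)
    then have "\<not> frac_le (eps_num, eps_index) (eps_term \<nu> h k)"
      using frac_le_not_le_trans[of "eps_term \<nu> Q j" "eps_term \<nu> h k" "(eps_num, eps_index)"]
        eps_index_maximal eps_index_pos by auto
    then show ?thesis using False by (simp add: slope_less_iff_not_frac_le)
  qed (simp add: slope_less_def)
  then show ?thesis using assms(1) by (simp add: slope_peak_def slope_le_if_slope_less_pos)
qed

lemma slope_peak_expansion_term:
  "expcoeff Q f i \<noteq> 0 \<Longrightarrow> slope_peak eps_num eps_index (expcoeff Q f i * Q ^ i) (i * eps_index)"
  using slope_peak_mult[OF slope_peak_degree_less[OF _ degree_expcoeff_less[OF nonzero]]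
      slope_peak_power[OF slope_peak_self]]
  by simp

lemma finite_trunc_val_candidates:
  "finite {\<nu> (expcoeff Q f i * Q ^ i) | i. i \<le> degree f \<and> expcoeff Q f i \<noteq> 0}"
  by (rule finite_image_set) simp

lemma trunc_val_le_term:
  "i \<le> degree f \<Longrightarrow> expcoeff Q f i \<noteq> 0 \<Longrightarrow> trunc_val \<nu> Q f \<le> \<nu> (expcoeff Q f i * Q ^ i)"
  unfolding trunc_val_def by (intro Min_le[OF finite_trunc_val_candidates]) auto

lemma trunc_val_attained:
  assumes "f \<noteq> 0"
  shows "\<exists>i\<le>degree f. expcoeff Q f i \<noteq> 0 \<and> trunc_val \<nu> Q f = \<nu> (expcoeff Q f i * Q ^ i)"
proof -
  have "\<exists>i\<le>degree f. expcoeff Q f i \<noteq> 0"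
  proof (rule ccontr)
    assume "\<not> ?thesis"
    then have "(\<Sum>i\<le>degree f. expcoeff Q f i * Q ^ i) = 0" by simp
    then show False using expansion[OF degree_pos, of f] assms by simp
  qed
  then have "{\<nu> (expcoeff Q f i * Q ^ i) | i. i \<le> degree f \<and> expcoeff Q f i \<noteq> 0} \<noteq> {}"
    by blast
  from Min_in[OF finite_trunc_val_candidates this] show ?thesis
    unfolding trunc_val_def by blast
qed

lemma trunc_val_le:
  assumes "f \<noteq> 0"
  shows "trunc_val \<nu> Q f \<le> \<nu> f"
proof -
  obtain i where "i \<le> degree f" "expcoeff Q f i * Q ^ i \<noteq> 0" "\<nu> (expcoeff Q f i * Q ^ i) \<le> \<nu> f"
    using val_sum_ge_term[of "{..degree f}" "\<lambda>i. expcoeff Q f i * Q ^ i"] expansion[OF degree_pos, of f] assms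
    by auto
  then show ?thesis using trunc_val_le_term[of i f] by fastforce
qed

lemma slope_le_if_trunc_val_eq:
  assumes "trunc_val \<nu> Q f = \<nu> f"
  shows "slope_le eps_num eps_index f k"
  unfolding slope_le_def
proof
  define T where "T i = expcoeff Q f i * Q ^ i" for i
  assume "hasse_deriv k f \<noteq> 0"
  moreover have "hasse_deriv k f = (\<Sum>i\<le>degree f. hasse_deriv k (T i))"
    using expansion[OF degree_pos, of f] hasse_deriv_sum[of k T "{..degree f}"] by (simp add: T_def)
  ultimately obtain i where i: "i \<le> degree f" "hasse_deriv k (T i) \<noteq> 0"
      "\<nu> (hasse_deriv k (T i)) \<le> \<nu> (hasse_deriv k f)"
    using val_sum_ge_term[of "{..degree f}" "\<lambda>i. hasse_deriv k (T i)"] by auto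
  then have fi: "expcoeff Q f i \<noteq> 0" by (auto simp: T_def)
  have "nsmul eps_index (\<nu> f) \<le> nsmul eps_index (\<nu> (T i))"
    using trunc_val_le_term[OF i(1) fi] assms by (simp add: T_def nsmul_mono)
  also have "\<dots> \<le> nsmul eps_index (\<nu> (hasse_deriv k (T i))) + nsmul k eps_num"
    using slope_peak_expansion_term[OF fi] i(2)
    unfolding slope_peak_def slope_le_def T_def by blast
  also have "\<dots> \<le> nsmul eps_index (\<nu> (hasse_deriv k f)) + nsmul k eps_num"
    using i(3) by (simp add: nsmul_mono)
  finally show "nsmul eps_index (\<nu> f) \<le> nsmul eps_index (\<nu> (hasse_deriv k f)) + nsmul k eps_num" .
qed

lemma trunc_val_last_attained:
  assumes f: "f \<noteq> 0" and less: "trunc_val \<nu> Q f < \<nu> f"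
  obtains i\<^sub>0 where "0 < i\<^sub>0" "i\<^sub>0 \<le> degree f" "expcoeff Q f i\<^sub>0 \<noteq> 0"
    "\<nu> (expcoeff Q f i\<^sub>0 * Q ^ i\<^sub>0) = trunc_val \<nu> Q f"
    "\<And>i. i \<le> degree f \<Longrightarrow> expcoeff Q f i \<noteq> 0 \<Longrightarrow> i\<^sub>0 < i \<Longrightarrow>
       trunc_val \<nu> Q f < \<nu> (expcoeff Q f i * Q ^ i)"
proof -
  define T where "T i = expcoeff Q f i * Q ^ i" for i
  define J where "J = {i. i \<le> degree f \<and> expcoeff Q f i \<noteq> 0 \<and> \<nu> (T i) = trunc_val \<nu> Q f}"
  have fin: "finite J" by (rule finite_subset[of _ "{..degree f}"]) (auto simp: J_def)
  have "J \<noteq> {}" using trunc_val_attained[OF f] by (auto simp: J_def T_def)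
  define i\<^sub>0 where "i\<^sub>0 = Max J"
  have i0: "i\<^sub>0 \<le> degree f" "expcoeff Q f i\<^sub>0 \<noteq> 0" "\<nu> (T i\<^sub>0) = trunc_val \<nu> Q f"
    using Max_in[OF fin \<open>J \<noteq> {}\<close>] by (simp_all add: i\<^sub>0_def J_def)
  have above: "trunc_val \<nu> Q f < \<nu> (T i)"
    if "i \<le> degree f" "expcoeff Q f i \<noteq> 0" "i\<^sub>0 < i" for i
  proof -
    have "i \<notin> J" using Max_ge[OF fin, of i] that(3) by (auto simp: i\<^sub>0_def)
    then show ?thesis using trunc_val_le_term[OF that(1,2)] that(1,2) by (auto simp: J_def T_def)
  qed
  have "i\<^sub>0 \<noteq> 0"
  proof
    assume "i\<^sub>0 = 0"
    then have "\<nu> (\<Sum>i\<le>degree f. T i) = \<nu> (T 0)"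
      using val_sum_eq_dominant_term[of "{..degree f}" 0 T] above i0 nonzero by (auto simp: T_def)
    then show False
      using expansion[OF degree_pos, of f] i0(3) less \<open>i\<^sub>0 = 0\<close> by (simp add: T_def)
  qed
  then show ?thesis using that i0 above by (simp add: T_def)
qed

text \<open>
  With \<open>i\<^sub>0\<close> the last index attaining \<open>\<nu>\<^sub>Q(f)\<close> and \<open>K = i\<^sub>0 b\<close>, the \<open>K\<close>-th slope of term \<open>i\<^sub>0\<close>
  is exactly \<open>A/b\<close>; earlier terms peak before \<open>K\<close>, so their \<open>K\<close>-th slope is smaller, and later
  terms have larger value. Hence \<open>\<partial>\<^sub>K\<close> of term \<open>i\<^sub>0\<close> dominates \<open>\<partial>\<^sub>K f\<close>.
\<close>

lemma not_slope_le_if_trunc_val_less: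
  assumes f: "f \<noteq> 0" and less: "trunc_val \<nu> Q f < \<nu> f"
  shows "\<exists>K. hasse_deriv K f \<noteq> 0 \<and> \<not> slope_le eps_num eps_index f K"
proof -
  define T where "T i = expcoeff Q f i * Q ^ i" for i
  define m where "m = trunc_val \<nu> Q f"
  obtain i\<^sub>0 where i0: "0 < i\<^sub>0" "i\<^sub>0 \<le> degree f" "expcoeff Q f i\<^sub>0 \<noteq> 0" "\<nu> (T i\<^sub>0) = m"
    and above: "\<And>i. i \<le> degree f \<Longrightarrow> expcoeff Q f i \<noteq> 0 \<Longrightarrow> i\<^sub>0 < i \<Longrightarrow> m < \<nu> (T i)"
    using trunc_val_last_attained[OF f less] unfolding T_def m_def by blast
  define K where "K = i\<^sub>0 * eps_index"
  have "slope_peak eps_num eps_index (T i) (i * eps_index)" if "expcoeff Q f i \<noteq> 0" for i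
    using slope_peak_expansion_term[OF that] by (simp add: T_def)
  note peak = this[unfolded slope_peak_def slope_le_def slope_less_def]
  have eq_i0: "nsmul eps_index m = nsmul eps_index (\<nu> (hasse_deriv K (T i\<^sub>0))) + nsmul K eps_num"
    and nonzero_i0: "hasse_deriv K (T i\<^sub>0) \<noteq> 0"
    using peak[OF i0(3)] i0(4) by (simp_all add: K_def)
  have "(\<Sum>i\<le>degree f. hasse_deriv K (T i)) \<noteq> 0 \<and>
      \<nu> (\<Sum>i\<le>degree f. hasse_deriv K (T i)) = \<nu> (hasse_deriv K (T i\<^sub>0))"
  proof (rule val_sum_eq_dominant_term)
    fix i
    assume i: "i \<in> {..degree f}" "i \<noteq> i\<^sub>0" "hasse_deriv K (T i) \<noteq> 0"
    then have fi: "expcoeff Q f i \<noteq> 0" by (auto simp: T_def)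
    have m_le: "m \<le> \<nu> (T i)" using trunc_val_le_term[of i f] i(1) fi by (simp add: m_def T_def)
    have "nsmul eps_index m < nsmul eps_index (\<nu> (hasse_deriv K (T i))) + nsmul K eps_num"
    proof (cases "i < i\<^sub>0")
      case True
      then have "i * eps_index < K" using eps_index_pos by (simp add: K_def)
      then have "nsmul eps_index (\<nu> (T i)) < nsmul eps_index (\<nu> (hasse_deriv K (T i))) + nsmul K eps_num"
        using peak[OF fi] i(3) by blast
      with nsmul_mono[OF m_le, of eps_index] show ?thesis by simp
    next
      case False
      then have "nsmul eps_index m < nsmul eps_index (\<nu> (T i))"
        using above[of i] i fi eps_index_pos by (simp add: nsmul_strict_mono)
      moreover have "nsmul eps_index (\<nu> (T i)) \<le> nsmul eps_index (\<nu> (hasse_deriv K (T i))) + nsmul K eps_num"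
        using peak[OF fi] i(3) by blast
      ultimately show ?thesis by simp
    qed
    then show "\<nu> (hasse_deriv K (T i\<^sub>0)) < \<nu> (hasse_deriv K (T i))"
      using eq_i0 by (simp add: nsmul_less_imp_less)
  qed (use i0 nonzero_i0 in auto)
  moreover have "(\<Sum>i\<le>degree f. hasse_deriv K (T i)) = hasse_deriv K f"
    using expansion[OF degree_pos, of f] hasse_deriv_sum[of K T "{..degree f}"]
    by (simp add: T_def)
  ultimately have "hasse_deriv K f \<noteq> 0"
    "nsmul eps_index (\<nu> (hasse_deriv K f)) + nsmul K eps_num = nsmul eps_index m"
    using eq_i0 by auto
  moreover have "nsmul eps_index m < nsmul eps_index (\<nu> f)"
    using less eps_index_pos by (simp add: m_def nsmul_strict_mono)
  ultimately show ?thesis by (auto simp: slope_le_def)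
qed

theorem trunc_val_eq_iff_eps_le:
  assumes "f \<noteq> 0"
  shows "trunc_val \<nu> Q f = \<nu> f \<longleftrightarrow> eps_le \<nu> f Q"
proof
  assume eq: "trunc_val \<nu> Q f = \<nu> f"
  have "frac_le (eps_term \<nu> f j) (eps_num, eps_index)" if "j \<in> eps_idx f" for j
  proof -
    have "hasse_deriv j f \<noteq> 0" using that by (simp add: eps_idx_def)
    with slope_le_if_trunc_val_eq[OF eq, of j] show ?thesis by (simp add: slope_le_iff_frac_le)
  qed
  then show "eps_le \<nu> f Q" by (simp add: eps_le_iff_frac_le)
next
  assume eps: "eps_le \<nu> f Q"
  show "trunc_val \<nu> Q f = \<nu> f"
  proof (rule ccontr)
    assume "trunc_val \<nu> Q f \<noteq> \<nu> f"
    with trunc_val_le[OF assms] have "trunc_val \<nu> Q f < \<nu> f" by simp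
    then obtain K where K: "hasse_deriv K f \<noteq> 0" "\<not> slope_le eps_num eps_index f K"
      using not_slope_le_if_trunc_val_less[OF assms] by blast
    then have "K \<noteq> 0" by (metis slope_le_0)
    with K have "K \<in> eps_idx f"
      by (simp add: eps_idx_def hasse_deriv_neq_0_imp_le_degree)
    with eps K show False by (simp add: eps_le_iff_frac_le slope_le_iff_frac_le)
  qed
qed

end


theorem corollary4p8:
  fixes \<nu> :: "'a::field poly \<Rightarrow> 'g::linordered_ab_group_add"
    and Q Q' f :: "'a poly"
  assumes "is_valuation \<nu>"
    and "key_poly \<nu> Q" and "key_poly \<nu> Q'"
    and "eps_le \<nu> Q Q'"
    and "f \<noteq> 0"
    and "trunc_val \<nu> Q f = \<nu> f"
  shows "trunc_val \<nu> Q' f = \<nu> f"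
proof -
  interpret Q: key_polynomial \<nu> Q
    using assms(1,2) by unfold_locales
  interpret Q': key_polynomial \<nu> Q'
    using assms(1,3) by unfold_locales
  have "eps_le \<nu> f Q" using Q.trunc_val_eq_iff_eps_le assms(5,6) by blast
  then have "eps_le \<nu> f Q'" using assms(4) by (rule eps_le_trans)
  then show ?thesis using Q'.trunc_val_eq_iff_eps_le assms(5) by blast
qed

end
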